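(* Let $G$ be a connected graph. The following are equivalent: (1) $G$ is bipartite; (2) $P_2\mid G$; (3) $G$ is not strongly disjoint from $P_2$; (4) $G$ is not weakly disjoint from $P_2$.
   Context: A weight function on finite $U$ is $\alpha:U\times U\to\mathbb{R}$, $\alpha\ge0$, symmetric, summing to $1$; degree $p(u)=\sum_{u'}\alpha(u,u')$; a graph is $(U,\alpha)$ with edges $(u,u')$ where $\alpha(u,u')>0$; connected means any two distinct vertices are joined by a path of edges; bipartite means $U=U_1\sqcup U_2$ with every edge joining $U_1$ to $U_2$. $P_2$ is the graph on $\{v_1,v_2\}$ with $\beta(v_1,v_2)=\beta(v_2,v_1)=1/2$, $\beta(v_i,v_i)=0$. For graphs $G=(U,\alpha)$, $H=(V,\beta)$ with degrees $p,q$, $H\mid G$ means there is a surjective $\phi:U\to V$ with (i) $q(v)=\sum_{u\in\phi^{-1}(v)}p(u)$, and (ii) $q(v)\sum_{u'\in\phi^{-1}(v')}\alpha(u,u')=p(u)\beta(v,v')$ for all $v,v'$, $u\in\phi^{-1}(v)$. A weight joining of $\alpha,\beta$ is a weight function $\gamma$ on $U\times V$ with degree $r(u,v)=\sum_{(u',v')}\gamma((u,v),(u',v'))$ such that $\sum_v r(u,v)=p(u)$, $\sum_u r(u,v)=q(v)$, $p(u)\sum_{\tilde v}\gamma((u,v),(u',\tilde v))=\alpha(u,u')r(u,v)$ and $q(v)\sum_{\tilde u}\gamma((u,v),(\tilde u,v'))=\beta(v,v')r(u,v)$. Strongly disjoint: the only weight joining is $\alpha\otimes\beta$, $(\alpha\otimes\beta)((u,v),(u',v'))=\alpha(u,u')\beta(v,v')$;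 weakly disjoint: every weight joining has degree $r(u,v)=p(u)q(v)$. *)

theory Defs
  imports Complex_Main
begin

text \<open>A finite vertex set U is represented by a finite type 'a (U = UNIV).
  A weight function is alpha :: 'a => 'a => real.\<close>

definition weight_fun :: "('a::finite \<Rightarrow> 'a \<Rightarrow> real) \<Rightarrow> bool" where
  "weight_fun \<alpha> \<longleftrightarrow> (\<forall>u u'. 0 \<le> \<alpha> u u') \<and> (\<forall>u u'. \<alpha> u u' = \<alpha> u' u)
     \<and> (\<Sum>u\<in>UNIV. \<Sum>u'\<in>UNIV. \<alpha> u u') = 1"

definition deg :: "('a::finite \<Rightarrow> 'a \<Rightarrow> real) \<Rightarrow> 'a \<Rightarrow> real" where
  "deg \<alpha> u = (\<Sum>u'\<in>UNIV. \<alpha> u u')"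

definition edge :: "('a \<Rightarrow> 'a \<Rightarrow> real) \<Rightarrow> 'a \<Rightarrow> 'a \<Rightarrow> bool" where
  "edge \<alpha> u u' \<longleftrightarrow> \<alpha> u u' > 0"

definition graph_connected :: "('a::finite \<Rightarrow> 'a \<Rightarrow> real) \<Rightarrow> bool" where
  "graph_connected \<alpha> \<longleftrightarrow> (\<forall>u u'. u \<noteq> u' \<longrightarrow> (edge \<alpha>)\<^sup>*\<^sup>* u u')"

definition graph_bipartite :: "('a::finite \<Rightarrow> 'a \<Rightarrow> real) \<Rightarrow> bool" where
  "graph_bipartite \<alpha> \<longleftrightarrow> (\<exists>U1 U2. U1 \<inter> U2 = {} \<and> U1 \<union> U2 = UNIV \<and>
     (\<forall>u u'. edge \<alpha> u u' \<longrightarrow> (u \<in> U1 \<and> u' \<in> U2) \<or> (u \<in> U2 \<and> u' \<in> U1)))"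

definition P2 :: "bool \<Rightarrow> bool \<Rightarrow> real" where
  "P2 v v' = (if v \<noteq> v' then 1/2 else 0)"

definition graph_divides :: "('b::finite \<Rightarrow> 'b \<Rightarrow> real) \<Rightarrow> ('a::finite \<Rightarrow> 'a \<Rightarrow> real) \<Rightarrow> bool" where
  "graph_divides \<beta> \<alpha> \<longleftrightarrow> (\<exists>\<phi> :: 'a \<Rightarrow> 'b. surj \<phi> \<and>
     (\<forall>v. deg \<beta> v = (\<Sum>u\<in>\<phi> -` {v}. deg \<alpha> u)) \<and>
     (\<forall>v v' u. \<phi> u = v \<longrightarrow>
        deg \<beta> v * (\<Sum>u'\<in>\<phi> -` {v'}. \<alpha> u u') = deg \<alpha> u * \<beta> v v'))"

definition weight_joining ::
  "('a::finite \<Rightarrow> 'a \<Rightarrow> real) \<Rightarrow> ('b::finite \<Rightarrow> 'b \<Rightarrow> real) \<Rightarrow> ('a \<times> 'b \<Rightarrow> 'a \<times> 'b \<Rightarrow> real) \<Rightarrow> bool" where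
  "weight_joining \<alpha> \<beta> \<gamma> \<longleftrightarrow> weight_fun \<gamma> \<and>
     (\<forall>u. (\<Sum>v\<in>UNIV. deg \<gamma> (u, v)) = deg \<alpha> u) \<and>
     (\<forall>v. (\<Sum>u\<in>UNIV. deg \<gamma> (u, v)) = deg \<beta> v) \<and>
     (\<forall>u v u'. deg \<alpha> u * (\<Sum>v2\<in>UNIV. \<gamma> (u, v) (u', v2)) = \<alpha> u u' * deg \<gamma> (u, v)) \<and>
     (\<forall>u v v'. deg \<beta> v * (\<Sum>u2\<in>UNIV. \<gamma> (u, v) (u2, v')) = \<beta> v v' * deg \<gamma> (u, v))"

definition tensor_weight ::
  "('a \<Rightarrow> 'a \<Rightarrow> real) \<Rightarrow> ('b \<Rightarrow> 'b \<Rightarrow> real) \<Rightarrow> ('a \<times> 'b \<Rightarrow> 'a \<times> 'b \<Rightarrow> real)" where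
  "tensor_weight \<alpha> \<beta> = (\<lambda>(u, v) (u', v'). \<alpha> u u' * \<beta> v v')"

definition strongly_disjoint :: "('a::finite \<Rightarrow> 'a \<Rightarrow> real) \<Rightarrow> ('b::finite \<Rightarrow> 'b \<Rightarrow> real) \<Rightarrow> bool" where
  "strongly_disjoint \<alpha> \<beta> \<longleftrightarrow> (\<forall>\<gamma>. weight_joining \<alpha> \<beta> \<gamma> \<longrightarrow> \<gamma> = tensor_weight \<alpha> \<beta>)"

definition weakly_disjoint :: "('a::finite \<Rightarrow> 'a \<Rightarrow> real) \<Rightarrow> ('b::finite \<Rightarrow> 'b \<Rightarrow> real) \<Rightarrow> bool" where
  "weakly_disjoint \<alpha> \<beta> \<longleftrightarrow> (\<forall>\<gamma>. weight_joining \<alpha> \<beta> \<gamma> \<longrightarrow>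
     (\<forall>u v. deg \<gamma> (u, v) = deg \<alpha> u * deg \<beta> v))"

end

theory Submission
  imports Defs
begin

text \<open>A proper 2-colouring \<phi> of G divides G onto P_2: by the symmetry of \<alpha>, each colour class
  carries half of the total degree, and \<alpha> u is concentrated on the class opposite to u.
  Conversely, a divisor map \<phi> gives the weight joining of \<alpha> and P_2 supported on the graph
  of \<phi>, whose degree is not the product degree. Finally, if \<gamma> is any weight joining of a
  connected \<alpha> with P_2, then \<gamma> only joins opposite vertices of P_2, and the proportion
  f u = r(u, True) / p(u) satisfies f u + f u' = 1 along every edge; unless f = 1/2 this
  2-colours G, and f = 1/2 forces \<gamma> to be the product joining.\<close>

lemma sum_UNIV_bool: "(\<Sum>v\<in>UNIV. f v) = f True + f False"
  by (simp add: UNIV_bool add.commute)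

lemma sum_UNIV_prod: "(\<Sum>x\<in>UNIV. f x) = (\<Sum>a\<in>UNIV. \<Sum>b\<in>UNIV. f (a, b))"
  by (simp add: sum.cartesian_product flip: UNIV_Times_UNIV)

lemma sum_UNIV_split_fibres:
  fixes \<phi> :: "'a::finite \<Rightarrow> bool"
  shows "(\<Sum>x\<in>UNIV. f x) = (\<Sum>x\<in>\<phi> -` {b}. f x) + (\<Sum>x\<in>\<phi> -` {\<not> b}. f x)"
proof -
  have "UNIV = \<phi> -` {b} \<union> \<phi> -` {\<not> b}" "\<phi> -` {b} \<inter> \<phi> -` {\<not> b} = {}" by auto
  then show ?thesis by (metis finite sum.union_disjoint)
qed

lemma sum_fibre_eq_sum_if:
  fixes \<phi> :: "'a::finite \<Rightarrow> 'b"
  shows "(\<Sum>x\<in>\<phi> -` {b}. f x) = (\<Sum>x\<in>UNIV. if \<phi> x = b then f x else 0)"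
  by (simp add: sum.inter_filter[symmetric] vimage_def)

lemma weight_fun_nonneg: "weight_fun \<alpha> \<Longrightarrow> 0 \<le> \<alpha> u u'"
  by (simp add: weight_fun_def)

lemma weight_fun_sym: "weight_fun \<alpha> \<Longrightarrow> \<alpha> u u' = \<alpha> u' u"
  by (simp add: weight_fun_def)

lemma sum_deg_eq_1: "weight_fun \<alpha> \<Longrightarrow> (\<Sum>u\<in>UNIV. deg \<alpha> u) = 1"
  by (simp add: weight_fun_def deg_def)

lemma edge_iff_nonzero: "weight_fun \<alpha> \<Longrightarrow> edge \<alpha> u u' \<longleftrightarrow> \<alpha> u u' \<noteq> 0"
  using weight_fun_nonneg[of \<alpha> u u'] by (auto simp: edge_def)

lemma weight_fun_ex_edge:
  assumes "weight_fun \<alpha>"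
  obtains u u' where "edge \<alpha> u u'"
proof -
  have "\<not> (\<forall>u u'. \<alpha> u u' = 0)"
  proof
    assume "\<forall>u u'. \<alpha> u u' = 0"
    with assms show False by (simp add: weight_fun_def)
  qed
  then show ?thesis using that edge_iff_nonzero[OF assms] by blast
qed

lemma deg_pos_if_edge:
  assumes "weight_fun \<alpha>" and "edge \<alpha> u u'"
  shows "0 < deg \<alpha> u"
proof -
  have "\<alpha> u u' \<le> deg \<alpha> u"
    unfolding deg_def using weight_fun_nonneg[OF assms(1)] by (intro member_le_sum) auto
  with assms(2) show ?thesis by (simp add: edge_def)
qed

lemma deg_pos_if_connected:
  assumes w: "weight_fun \<alpha>" and c: "graph_connected \<alpha>"
  shows "0 < deg \<alpha> u"
proof -
  obtain x y where xy: "edge \<alpha> x y" using weight_fun_ex_edge[OF w] .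
  have "\<exists>u'. edge \<alpha> u u'"
  proof (cases "u = x")
    case False
    with c have "(edge \<alpha>)\<^sup>*\<^sup>* u x" by (simp add: graph_connected_def)
    with False show ?thesis by (metis converse_rtranclpE)
  qed (use xy in blast)
  then show ?thesis using deg_pos_if_edge[OF w] by blast
qed

lemma deg_P2: "deg P2 v = 1/2"
  by (cases v) (simp_all add: deg_def P2_def sum_UNIV_bool)

lemma deg_tensor_weight: "deg (tensor_weight \<alpha> \<beta>) (u, v) = deg \<alpha> u * deg \<beta> v"
  unfolding deg_def tensor_weight_def sum_UNIV_prod by (simp add: sum_product)

lemma strongly_disjoint_imp_weakly_disjoint:
  "strongly_disjoint \<alpha> \<beta> \<Longrightarrow> weakly_disjoint \<alpha> \<beta>"
  unfolding strongly_disjoint_def weakly_disjoint_def by (metis deg_tensor_weight)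

definition proper_colouring :: "('a \<Rightarrow> 'a \<Rightarrow> real) \<Rightarrow> ('a \<Rightarrow> bool) \<Rightarrow> bool" where
  "proper_colouring \<alpha> \<phi> \<longleftrightarrow> (\<forall>u u'. edge \<alpha> u u' \<longrightarrow> \<phi> u' \<noteq> \<phi> u)"

lemma graph_bipartite_iff_proper_colouring:
  "graph_bipartite \<alpha> \<longleftrightarrow> (\<exists>\<phi>. proper_colouring \<alpha> \<phi>)"
proof
  assume "graph_bipartite \<alpha>"
  then obtain U1 U2 where "U1 \<inter> U2 = {}"
    and "\<And>u u'. edge \<alpha> u u' \<Longrightarrow> (u \<in> U1 \<and> u' \<in> U2) \<or> (u \<in> U2 \<and> u' \<in> U1)"
    unfolding graph_bipartite_def by blast
  then have "proper_colouring \<alpha> (\<lambda>u. u \<in> U1)"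
    unfolding proper_colouring_def by blast
  then show "\<exists>\<phi>. proper_colouring \<alpha> \<phi>" by blast
next
  assume "\<exists>\<phi>. proper_colouring \<alpha> \<phi>"
  then obtain \<phi> where "proper_colouring \<alpha> \<phi>" ..
  then show "graph_bipartite \<alpha>"
    unfolding graph_bipartite_def proper_colouring_def
    by (intro exI[of _ "{u. \<phi> u}"] exI[of _ "{u. \<not> \<phi> u}"]) auto
qed

context
  fixes \<alpha> :: "'a::finite \<Rightarrow> 'a \<Rightarrow> real" and \<phi> :: "'a \<Rightarrow> bool"
  assumes w: "weight_fun \<alpha>" and col: "proper_colouring \<alpha> \<phi>"
begin

lemma proper_colouring_same_colour_zero: "\<phi> u' = \<phi> u \<Longrightarrow> \<alpha> u u' = 0"
  using col edge_iff_nonzero[OF w] by (auto simp: proper_colouring_def)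

lemma proper_colouring_sum_fibre:
  "(\<Sum>u'\<in>\<phi> -` {b}. \<alpha> u u') = (if b = \<phi> u then 0 else deg \<alpha> u)"
proof (cases "b = \<phi> u")
  case True
  then show ?thesis by (simp add: sum.neutral proper_colouring_same_colour_zero)
next
  case False
  then have "(if \<phi> u' = b then \<alpha> u u' else 0) = \<alpha> u u'" for u'
    using proper_colouring_same_colour_zero[of u' u] by auto
  with False show ?thesis by (simp add: sum_fibre_eq_sum_if deg_def)
qed

lemma proper_colouring_class_deg: "(\<Sum>u\<in>\<phi> -` {b}. deg \<alpha> u) = 1/2"
proof -
  define M where "M b = (\<Sum>u\<in>\<phi> -` {b}. deg \<alpha> u)" for b
  have M_cross: "M b = (\<Sum>u\<in>\<phi> -` {b}. \<Sum>u'\<in>\<phi> -` {\<not> b}. \<alpha> u u')" for b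
    unfolding M_def by (intro sum.cong) (auto simp: proper_colouring_sum_fibre)
  have "M b = (\<Sum>u'\<in>\<phi> -` {\<not> b}. \<Sum>u\<in>\<phi> -` {b}. \<alpha> u' u)"
    unfolding M_cross by (subst sum.swap) (simp add: weight_fun_sym[OF w])
  also have "\<dots> = M (\<not> b)"
    unfolding M_cross by simp
  finally have "M b = M (\<not> b)" .
  moreover have "M b + M (\<not> b) = 1"
    using sum_UNIV_split_fibres[of "deg \<alpha>" \<phi> b] sum_deg_eq_1[OF w] by (simp add: M_def)
  ultimately show ?thesis by (simp add: M_def)
qed

lemma proper_colouring_surj: "surj \<phi>"
proof -
  obtain x y where "edge \<alpha> x y" using weight_fun_ex_edge[OF w] .
  with col have "\<phi> y = (\<not> \<phi> x)" by (auto simp: proper_colouring_def)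
  then have "b \<in> range \<phi>" for b by (cases "b = \<phi> x") auto
  then show ?thesis by blast
qed

lemma proper_colouring_divides_P2: "graph_divides P2 \<alpha>"
  unfolding graph_divides_def
proof (intro exI[of _ \<phi>] conjI allI impI proper_colouring_surj)
  fix v
  show "deg P2 v = (\<Sum>u\<in>\<phi> -` {v}. deg \<alpha> u)"
    by (simp add: deg_P2 proper_colouring_class_deg)
next
  fix v v' u
  assume "\<phi> u = v"
  then show "deg P2 v * (\<Sum>u'\<in>\<phi> -` {v'}. \<alpha> u u') = deg \<alpha> u * P2 v v'"
    by (auto simp: proper_colouring_sum_fibre deg_P2 P2_def)
qed

end

lemma graph_bipartite_imp_divides_P2:
  "weight_fun \<alpha> \<Longrightarrow> graph_bipartite \<alpha> \<Longrightarrow> graph_divides P2 \<alpha>"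
  using proper_colouring_divides_P2 graph_bipartite_iff_proper_colouring by blast

definition map_joining :: "('a \<Rightarrow> 'b) \<Rightarrow> ('a \<Rightarrow> 'a \<Rightarrow> real) \<Rightarrow> ('a \<times> 'b \<Rightarrow> 'a \<times> 'b \<Rightarrow> real)" where
  "map_joining \<phi> \<alpha> = (\<lambda>(u, v) (u', v'). if v = \<phi> u \<and> v' = \<phi> u' then \<alpha> u u' else 0)"

lemma sum_map_joining_left:
  fixes \<phi> :: "'a \<Rightarrow> 'b::finite"
  shows "(\<Sum>v'\<in>UNIV. map_joining \<phi> \<alpha> (u, v) (u', v')) = (if v = \<phi> u then \<alpha> u u' else 0)"
  by (simp add: map_joining_def)

lemma sum_map_joining_right:
  fixes \<phi> :: "'a::finite \<Rightarrow> 'b"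
  shows "(\<Sum>u'\<in>UNIV. map_joining \<phi> \<alpha> (u, v) (u', v'))
      = (if v = \<phi> u then \<Sum>u'\<in>\<phi> -` {v'}. \<alpha> u u' else 0)"
  by (simp add: map_joining_def sum_fibre_eq_sum_if eq_commute)

lemma deg_map_joining:
  fixes \<phi> :: "'a::finite \<Rightarrow> 'b::finite"
  shows "deg (map_joining \<phi> \<alpha>) (u, v) = (if v = \<phi> u then deg \<alpha> u else 0)"
  by (simp add: deg_def sum_UNIV_prod sum_map_joining_left)

lemma weight_fun_map_joining:
  fixes \<phi> :: "'a::finite \<Rightarrow> 'b::finite"
  assumes w: "weight_fun \<alpha>"
  shows "weight_fun (map_joining \<phi> \<alpha>)"
proof -
  have "(\<Sum>x\<in>UNIV. \<Sum>x'\<in>UNIV. map_joining \<phi> \<alpha> x x')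
      = (\<Sum>u\<in>UNIV. \<Sum>v\<in>UNIV. deg (map_joining \<phi> \<alpha>) (u, v))"
    by (simp add: deg_def sum_UNIV_prod[of "\<lambda>x. \<Sum>x'\<in>UNIV. map_joining \<phi> \<alpha> x x'"])
  also have "\<dots> = 1"
    by (simp add: deg_map_joining sum_deg_eq_1[OF w])
  finally show ?thesis
    using weight_fun_nonneg[OF w] weight_fun_sym[OF w]
    by (auto simp: weight_fun_def map_joining_def)
qed

lemma graph_divides_imp_map_joining:
  fixes \<alpha> :: "'a::finite \<Rightarrow> 'a \<Rightarrow> real" and \<beta> :: "'b::finite \<Rightarrow> 'b \<Rightarrow> real"
  assumes w: "weight_fun \<alpha>" and "graph_divides \<beta> \<alpha>"
  obtains \<phi> where "weight_joining \<alpha> \<beta> (map_joining \<phi> \<alpha>)"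
proof -
  from assms(2) obtain \<phi> :: "'a \<Rightarrow> 'b"
    where mass: "\<And>v. deg \<beta> v = (\<Sum>u\<in>\<phi> -` {v}. deg \<alpha> u)"
      and weights: "\<And>v v' u. \<phi> u = v \<Longrightarrow> deg \<beta> v * (\<Sum>u'\<in>\<phi> -` {v'}. \<alpha> u u') = deg \<alpha> u * \<beta> v v'"
    unfolding graph_divides_def by blast
  have "weight_joining \<alpha> \<beta> (map_joining \<phi> \<alpha>)"
    unfolding weight_joining_def
  proof (intro conjI allI weight_fun_map_joining[OF w])
    fix u
    show "(\<Sum>v\<in>UNIV. deg (map_joining \<phi> \<alpha>) (u, v)) = deg \<alpha> u"
      by (simp add: deg_map_joining)
  next
    fix v
    show "(\<Sum>u\<in>UNIV. deg (map_joining \<phi> \<alpha>) (u, v)) = deg \<beta> v"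
      by (simp add: deg_map_joining mass sum_fibre_eq_sum_if eq_commute)
  next
    fix u v u'
    show "deg \<alpha> u * (\<Sum>v'\<in>UNIV. map_joining \<phi> \<alpha> (u, v) (u', v'))
        = \<alpha> u u' * deg (map_joining \<phi> \<alpha>) (u, v)"
      by (simp add: sum_map_joining_left deg_map_joining)
  next
    fix u v v'
    show "deg \<beta> v * (\<Sum>u'\<in>UNIV. map_joining \<phi> \<alpha> (u, v) (u', v'))
        = \<beta> v v' * deg (map_joining \<phi> \<alpha>) (u, v)"
      using weights[of u v v'] by (auto simp: sum_map_joining_right deg_map_joining mult.commute)
  qed
  then show ?thesis by (rule that)
qed

lemma graph_divides_P2_imp_not_weakly_disjoint:
  assumes w: "weight_fun \<alpha>" and "graph_divides P2 \<alpha>"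
  shows "\<not> weakly_disjoint \<alpha> P2"
proof
  assume wd: "weakly_disjoint \<alpha> P2"
  obtain \<phi> where j: "weight_joining \<alpha> P2 (map_joining \<phi> \<alpha>)"
    using graph_divides_imp_map_joining[OF assms] .
  obtain u u' where "edge \<alpha> u u'" using weight_fun_ex_edge[OF w] .
  then have "0 < deg \<alpha> u" using deg_pos_if_edge[OF w] by blast
  moreover have "deg (map_joining \<phi> \<alpha>) (u, \<phi> u) = deg \<alpha> u * deg P2 (\<phi> u)"
    using wd j by (simp add: weakly_disjoint_def)
  ultimately show False by (simp add: deg_map_joining deg_P2)
qed

lemma graph_bipartite_if_negated_along_edges:
  fixes \<alpha> :: "'a::finite \<Rightarrow> 'a \<Rightarrow> real" and f :: "'a \<Rightarrow> real"
  assumes c: "graph_connected \<alpha>"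
    and neg: "\<And>u u'. edge \<alpha> u u' \<Longrightarrow> f u' = - f u"
    and "f u0 \<noteq> 0"
  shows "graph_bipartite \<alpha>"
proof -
  have reach: "f u = f u0 \<or> f u = - f u0" for u
  proof -
    have "(edge \<alpha>)\<^sup>*\<^sup>* u0 u" using c by (cases "u0 = u") (auto simp: graph_connected_def)
    then show ?thesis by induction (auto dest: neg)
  qed
  have "proper_colouring \<alpha> (\<lambda>u. f u = f u0)"
    unfolding proper_colouring_def
  proof (intro allI impI)
    fix u u'
    assume "edge \<alpha> u u'"
    then have "f u' = - f u" by (rule neg)
    then show "(f u' = f u0) \<noteq> (f u = f u0)" using reach[of u] \<open>f u0 \<noteq> 0\<close> by auto
  qed
  then show ?thesis using graph_bipartite_iff_proper_colouring by blast
qed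

context
  fixes \<alpha> :: "'a::finite \<Rightarrow> 'a \<Rightarrow> real" and \<gamma> :: "'a \<times> bool \<Rightarrow> 'a \<times> bool \<Rightarrow> real"
  assumes w: "weight_fun \<alpha>" and j: "weight_joining \<alpha> P2 \<gamma>"
begin

lemma weight_joining_P2_same_side: "\<gamma> (u, v) (u', v) = 0"
proof -
  have "deg P2 v * (\<Sum>u2\<in>UNIV. \<gamma> (u, v) (u2, v')) = P2 v v' * deg \<gamma> (u, v)" for v'
    using j unfolding weight_joining_def by blast
  from this[of v] have "(\<Sum>u2\<in>UNIV. \<gamma> (u, v) (u2, v)) = 0"
    by (simp add: deg_P2 P2_def)
  moreover have "0 \<le> \<gamma> x x'" for x x'
    using j unfolding weight_joining_def weight_fun_def by blast
  ultimately show ?thesis by (simp add: sum_nonneg_eq_0_iff)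
qed

lemma weight_joining_P2_cross:
  "deg \<alpha> u * \<gamma> (u, v) (u', \<not> v) = \<alpha> u u' * deg \<gamma> (u, v)"
proof -
  have "deg \<alpha> u * (\<Sum>v'\<in>UNIV. \<gamma> (u, v) (u', v')) = \<alpha> u u' * deg \<gamma> (u, v)"
    using j unfolding weight_joining_def by blast
  then show ?thesis
    using weight_joining_P2_same_side[of u v u'] by (cases v) (simp_all add: sum_UNIV_bool)
qed

lemma weight_joining_P2_deg_sum: "deg \<gamma> (u, True) + deg \<gamma> (u, False) = deg \<alpha> u"
  using j by (simp add: weight_joining_def sum_UNIV_bool)

lemma weight_joining_P2_proportion_edge:
  assumes "edge \<alpha> u u'"
  shows "deg \<gamma> (u, True) / deg \<alpha> u + deg \<gamma> (u', True) / deg \<alpha> u' = 1"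
proof -
  have a: "0 < \<alpha> u u'" using assms by (simp add: edge_def)
  have pu: "0 < deg \<alpha> u" and pu': "0 < deg \<alpha> u'"
    using assms deg_pos_if_edge[OF w] edge_iff_nonzero[OF w] weight_fun_sym[OF w] by metis+
  have \<gamma>_sym: "\<gamma> (u, True) (u', False) = \<gamma> (u', False) (u, True)"
    using j by (simp add: weight_joining_def weight_fun_def)
  have "deg \<gamma> (u, True) / deg \<alpha> u = \<gamma> (u, True) (u', False) / \<alpha> u u'"
    using weight_joining_P2_cross[of u True u'] a pu by (simp add: field_simps)
  also have "\<dots> = deg \<gamma> (u', False) / deg \<alpha> u'"
    using weight_joining_P2_cross[of u' False u] \<gamma>_sym
      weight_fun_sym[OF w, of u u'] a pu'
    by (simp add: field_simps)
  also have "\<dots> = 1 - deg \<gamma> (u', True) / deg \<alpha> u'"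
    using weight_joining_P2_deg_sum[of u'] pu' by (simp add: field_simps)
  finally show ?thesis by simp
qed

lemma weight_joining_P2_eq_tensor_weight:
  assumes c: "graph_connected \<alpha>" and nb: "\<not> graph_bipartite \<alpha>"
  shows "\<gamma> = tensor_weight \<alpha> P2"
proof -
  have p: "0 < deg \<alpha> u" for u using deg_pos_if_connected[OF w c] .
  define f where "f u = deg \<gamma> (u, True) / deg \<alpha> u - 1/2" for u
  have "f u' = - f u" if "edge \<alpha> u u'" for u u'
    using weight_joining_P2_proportion_edge[OF that] by (simp add: f_def)
  then have "f u = 0" for u
    using graph_bipartite_if_negated_along_edges[OF c] nb by blast
  then have half: "deg \<gamma> (u, v) = deg \<alpha> u / 2" for u v
    using weight_joining_P2_deg_sum[of u] p[of u] by (cases v) (simp_all add: f_def field_simps)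
  have "\<gamma> (u, v) (u', v') = \<alpha> u u' * P2 v v'" for u v u' v'
  proof (cases "v' = v")
    case True
    then show ?thesis by (simp add: weight_joining_P2_same_side P2_def)
  next
    case False
    have "deg \<alpha> u * \<gamma> (u, v) (u', \<not> v) = deg \<alpha> u * (\<alpha> u u' / 2)"
      using weight_joining_P2_cross[of u v u'] half[of u v] by simp
    then have "\<gamma> (u, v) (u', \<not> v) = \<alpha> u u' / 2"
      using p[of u] by simp
    moreover have "v' = (\<not> v)" using False by blast
    ultimately show ?thesis by (simp add: P2_def)
  qed
  then show ?thesis by (simp add: fun_eq_iff tensor_weight_def split_paired_All)
qed

end

lemma not_graph_bipartite_imp_strongly_disjoint_P2:
  "weight_fun \<alpha> \<Longrightarrow> graph_connected \<alpha> \<Longrightarrow> \<not> graph_bipartite \<alpha> \<Longrightarrow> strongly_disjoint \<alpha> P2"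
  by (simp add: strongly_disjoint_def weight_joining_P2_eq_tensor_weight)

theorem proposition7p1:
  fixes \<alpha> :: "'a::finite \<Rightarrow> 'a \<Rightarrow> real"
  assumes "weight_fun \<alpha>"
    and "graph_connected \<alpha>"
  shows "(graph_bipartite \<alpha> \<longleftrightarrow> graph_divides P2 \<alpha>)
       \<and> (graph_divides P2 \<alpha> \<longleftrightarrow> \<not> strongly_disjoint \<alpha> P2)
       \<and> (\<not> strongly_disjoint \<alpha> P2 \<longleftrightarrow> \<not> weakly_disjoint \<alpha> P2)"
proof -
  have "graph_bipartite \<alpha> \<Longrightarrow> graph_divides P2 \<alpha>"
    using graph_bipartite_imp_divides_P2[OF assms(1)] .
  moreover have "graph_divides P2 \<alpha> \<Longrightarrow> \<not> weakly_disjoint \<alpha> P2"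
    using graph_divides_P2_imp_not_weakly_disjoint[OF assms(1)] .
  moreover have "\<not> weakly_disjoint \<alpha> P2 \<Longrightarrow> \<not> strongly_disjoint \<alpha> P2"
    using strongly_disjoint_imp_weakly_disjoint by blast
  moreover have "\<not> strongly_disjoint \<alpha> P2 \<Longrightarrow> graph_bipartite \<alpha>"
    using not_graph_bipartite_imp_strongly_disjoint_P2[OF assms] by blast
  ultimately show ?thesis by blast
qed

end
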